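(* Let $\beta=1$, $\gamma>2$ and $G\in\mathcal S_{Rob}(\mathbb R^* )$. Then $$\lim_{n\to\infty}\mathbb E_{\nu_b}\Big[\sup_{t\in[0,T]}\Big(\int_0^t\frac{\Theta(n)}{\sqrt n}\sum_{x=0}^{\infty}\mathcal R_{n,\beta}G(\tfrac xn)\,\bar\eta^n_s(0)\,ds\Big)^2\Big]=0$$ and $$\lim_{n\to\infty}\mathbb E_{\nu_b}\Big[\sup_{t\in[0,T]}\Big(\int_0^t\frac{\Theta(n)}{\sqrt n}\sum_{x=-\infty}^{-1}\mathcal R_{n,\beta}G(\tfrac xn)\,\bar\eta^n_s(-1)\,ds\Big)^2\Big]=0.$$
   Context: Fix $\gamma>2$, $\alpha>0$, $\beta=1$, $b\in(0,1)$, $T>0$. Let $p(0)=0$, $p(x)=c_\gamma|x|^{-\gamma-1}$ ($x\ne0$), $c_\gamma$ normalizing; $m=\sum_{x\ge1}xp(x)$, $\sigma^2=\sum_xx^2p(x)$, $\kappa_\gamma=\sigma^2/2$, $\hat\alpha=\alpha m/\kappa_\gamma$. Slow bonds: unordered pairs $\{x,y\}$ with $x\le-1$, $y\ge0$; rates $r^n_{x,y}=\alpha n^{-\beta}$ on slow bonds, $1$ otherwise. Exclusion process on $\{0,1\}^{\mathbb Z}$ with generator $\mathcal L_nf(\eta)=\sum_{x,y}p(y-x)\eta(x)(1-\eta(y))r^n_{x,y}[f(\eta^{x,y})-f(\eta)]$. $\Theta(n)=n^2$. $\eta^n_t=\eta_{t\Theta(n)}$ started from the Bernoulli product measure $\nu_b$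 of density $b$; $\mathbb E_{\nu_b}$ is the corresponding expectation; $\bar\eta^n_t(x)=\eta^n_t(x)-b$. $\mathcal S_{Rob}(\mathbb R^* )$: functions $G=\mathbb 1_{\{u<0\}}G_-+\mathbb 1_{\{u\ge0\}}G_+$ with $G_\pm$ Schwartz functions satisfying $G_-^{(2k+1)}(0)=G_+^{(2k+1)}(0)=\hat\alpha[G_+^{(2k)}(0)-G_-^{(2k)}(0)]$ for all $k\ge0$. Operator (for $\beta\ge1$): for $x\ge0$, $\mathcal R_{n,\beta}G(\tfrac xn)=\alpha n^{-\beta}\sum_{y\le-1}[G(\tfrac yn)-G(\tfrac xn)]p(y-x)+n^{-1}G_+'(0)\sum_{y\ge0}(y-x)p(y-x)$; for $x\le-1$, $\mathcal R_{n,\beta}G(\tfrac xn)=\alpha n^{-\beta}\sum_{y\ge0}[G(\tfrac yn)-G(\tfrac xn)]p(y-x)+n^{-1}G_-'(0)\sum_{y\le-1}(y-x)p(y-x)$. *)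

theory Defs
  imports "HOL-Probability.Probability"
begin

definition cgam :: "real \<Rightarrow> real" where
  "cgam \<gamma> = 1 / (\<Sum>\<^sub>\<infinity>x\<in>(UNIV::int set) - {0}. \<bar>real_of_int x\<bar> powr (-\<gamma>-1))"

definition pker :: "real \<Rightarrow> int \<Rightarrow> real" where
  "pker \<gamma> x = (if x = 0 then 0 else cgam \<gamma> * \<bar>real_of_int x\<bar> powr (-\<gamma>-1))"

definition mean_m :: "real \<Rightarrow> real" where
  "mean_m \<gamma> = (\<Sum>\<^sub>\<infinity>x\<in>{1::int..}. real_of_int x * pker \<gamma> x)"

definition sigma2 :: "real \<Rightarrow> real" where
  "sigma2 \<gamma> = (\<Sum>\<^sub>\<infinity>x\<in>(UNIV::int set). (real_of_int x)^2 * pker \<gamma> x)"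

definition kappa :: "real \<Rightarrow> real" where
  "kappa \<gamma> = sigma2 \<gamma> / 2"

definition alpha_hat :: "real \<Rightarrow> real \<Rightarrow> real" where
  "alpha_hat \<gamma> \<alpha> = \<alpha> * mean_m \<gamma> / kappa \<gamma>"

definition schwartz :: "(real \<Rightarrow> real) \<Rightarrow> bool" where
  "schwartz f \<longleftrightarrow>
     (\<forall>j x. (deriv ^^ j) f differentiable at x) \<and>
     (\<forall>j k. bounded (range (\<lambda>x. x ^ k * (deriv ^^ j) f x)))"

text \<open>The pair (G_-, G_+) defines an element of S_Rob(R*).\<close>
definition robin_pair :: "real \<Rightarrow> real \<Rightarrow> (real \<Rightarrow> real) \<Rightarrow> (real \<Rightarrow> real) \<Rightarrow> bool" where
  "robin_pair \<gamma> \<alpha> Gm Gp \<longleftrightarrow> schwartz Gm \<and> schwartz Gp \<and>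
     (\<forall>k::nat.
        (deriv ^^ (2*k+1)) Gm 0 = alpha_hat \<gamma> \<alpha> * ((deriv ^^ (2*k)) Gp 0 - (deriv ^^ (2*k)) Gm 0) \<and>
        (deriv ^^ (2*k+1)) Gp 0 = alpha_hat \<gamma> \<alpha> * ((deriv ^^ (2*k)) Gp 0 - (deriv ^^ (2*k)) Gm 0))"

definition glue :: "(real \<Rightarrow> real) \<Rightarrow> (real \<Rightarrow> real) \<Rightarrow> real \<Rightarrow> real" where
  "glue Gm Gp u = (if u < 0 then Gm u else Gp u)"

text \<open>The operator R_{n,beta} G (x/n) with beta = 1.\<close>
definition Rop :: "real \<Rightarrow> real \<Rightarrow> (real \<Rightarrow> real) \<Rightarrow> (real \<Rightarrow> real) \<Rightarrow> nat \<Rightarrow> int \<Rightarrow> real" where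
  "Rop \<gamma> \<alpha> Gm Gp n x =
     (if x \<ge> 0 then
        \<alpha> / real n * (\<Sum>\<^sub>\<infinity>y\<in>{..-1::int}.
            (glue Gm Gp (real_of_int y / real n) - glue Gm Gp (real_of_int x / real n)) * pker \<gamma> (y - x))
        + 1 / real n * deriv Gp 0 * (\<Sum>\<^sub>\<infinity>y\<in>{0::int..}. real_of_int (y - x) * pker \<gamma> (y - x))
      else
        \<alpha> / real n * (\<Sum>\<^sub>\<infinity>y\<in>{0::int..}.
            (glue Gm Gp (real_of_int y / real n) - glue Gm Gp (real_of_int x / real n)) * pker \<gamma> (y - x))
        + 1 / real n * deriv Gm 0 * (\<Sum>\<^sub>\<infinity>y\<in>{..-1::int}. real_of_int (y - x) * pker \<gamma> (y - x)))"

type_synonym config = "int \<Rightarrow> bool"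

definition exch :: "config \<Rightarrow> int \<Rightarrow> int \<Rightarrow> config" where
  "exch \<eta> x y = (\<lambda>z. if z = x then \<eta> y else if z = y then \<eta> x else \<eta> z)"

definition slow_bond :: "int \<Rightarrow> int \<Rightarrow> bool" where
  "slow_bond x y \<longleftrightarrow> (x \<le> -1 \<and> y \<ge> 0) \<or> (y \<le> -1 \<and> x \<ge> 0)"

text \<open>Rates with beta = 1.\<close>
definition rate :: "real \<Rightarrow> nat \<Rightarrow> int \<Rightarrow> int \<Rightarrow> real" where
  "rate \<alpha> n x y = (if slow_bond x y then \<alpha> / real n else 1)"

definition gen :: "real \<Rightarrow> real \<Rightarrow> nat \<Rightarrow> (config \<Rightarrow> real) \<Rightarrow> config \<Rightarrow> real" where
  "gen \<gamma> \<alpha> n f \<eta> = (\<Sum>\<^sub>\<infinity>(x,y)\<in>(UNIV::(int \<times> int) set).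
      pker \<gamma> (y - x) * of_bool (\<eta> x) * (1 - of_bool (\<eta> y)) * rate \<alpha> n x y
        * (f (exch \<eta> x y) - f \<eta>))"

definition cylinder :: "(config \<Rightarrow> real) \<Rightarrow> bool" where
  "cylinder f \<longleftrightarrow> (\<exists>A. finite A \<and> (\<forall>\<eta> \<zeta>. (\<forall>x\<in>A. \<eta> x = \<zeta> x) \<longrightarrow> f \<eta> = f \<zeta>))"

definition bernoulli_product :: "real \<Rightarrow> config measure" where
  "bernoulli_product b = PiM (UNIV::int set) (\<lambda>_. measure_pmf (bernoulli_pmf b))"

definition nat_filt :: "'a measure \<Rightarrow> (real \<Rightarrow> 'a \<Rightarrow> config) \<Rightarrow> real \<Rightarrow> 'a measure" where
  "nat_filt M X s = sigma (space M) {{\<omega> \<in> space M. X r \<omega> x} | r x. 0 \<le> r \<and> r \<le> s}"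

text \<open>X is (a version of) the exclusion process with generator L_n started from nu_b:
  cadlag paths, initial law nu_b, and X solves the martingale problem for L_n on local
  functions with respect to its natural filtration.\<close>
definition exclusion_solution ::
  "real \<Rightarrow> real \<Rightarrow> real \<Rightarrow> nat \<Rightarrow> 'a measure \<Rightarrow> (real \<Rightarrow> 'a \<Rightarrow> config) \<Rightarrow> bool" where
  "exclusion_solution \<gamma> \<alpha> b n M X \<longleftrightarrow>
     prob_space M \<and>
     (\<forall>t. X t \<in> M \<rightarrow>\<^sub>M bernoulli_product b) \<and>
     distr M (bernoulli_product b) (X 0) = bernoulli_product b \<and>
     (\<forall>\<omega>\<in>space M. \<forall>x. \<forall>t\<ge>0.
        (\<forall>\<^sub>F s in at_right t. X s \<omega> x = X t \<omega> x) \<and>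
        (t > 0 \<longrightarrow> (\<exists>v. \<forall>\<^sub>F s in at_left t. X s \<omega> x = v))) \<and>
     (\<forall>f. cylinder f \<longrightarrow>
        (let Mf = (\<lambda>t \<omega>. f (X t \<omega>) - f (X 0 \<omega>)
                     - (LINT s:{0..t}|lborel. gen \<gamma> \<alpha> n f (X s \<omega>)))
         in \<forall>t\<ge>0. integrable M (Mf t) \<and> Mf t \<in> borel_measurable (nat_filt M X t) \<and>
              (\<forall>s. 0 \<le> s \<and> s \<le> t \<longrightarrow>
                 (\<forall>A\<in>sets (nat_filt M X s).
                    (LINT \<omega>:A|M. Mf t \<omega>) = (LINT \<omega>:A|M. Mf s \<omega>)))))"

end

theory Submission
  imports Defs
begin

(* The factor eta(x) - b is bounded by 1, so it suffices that sum_{x >= 0} R_{n,1} G(x/n) = O(n^-2)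
   (and likewise for x <= -1): then the time integral is O(T n^(-1/2)) uniformly in t and omega.
   Write x = i >= 0 and y = -1 - j. By the symmetry of p the drift sum over y >= 0 reduces to the
   tail sum_{k > i} k p(k). Freezing G(y/n) and G(x/n) at G_-(0) and G_+(0) costs at most
   L (i + j + 2) / n per term, and against p(i + j + 1) these errors add up to
   O(n^-1 sum_k k^2 p(k)), which is finite because gamma > 2. Since sum_i sum_{k > i} p(k) = m and
   sum_i sum_{k > i} k p(k) = kappa_gamma, the frozen part equals
   (alpha (G_-(0) - G_+(0)) m + G_+'(0) kappa_gamma) / n, and this vanishes by the Robin condition
   of order zero. *)

section \<open>Tail sums against a kernel with finite second moment\<close>

lemma abs_summable_infsum_eq_suminf:
  fixes f :: "nat \<Rightarrow> real"
  assumes "summable (\<lambda>n. \<bar>f n\<bar>)"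
  shows "f summable_on UNIV" and "infsum f UNIV = suminf f"
proof -
  have "(f has_sum suminf f) UNIV"
    using assms by (intro norm_summable_imp_has_sum) (auto intro: summable_sums summable_rabs_cancel)
  then show "f summable_on UNIV" "infsum f UNIV = suminf f"
    by (auto intro: infsumI has_sum_imp_summable)
qed

lemma has_sum_tails:
  fixes g :: "nat \<Rightarrow> real"
  assumes g0: "\<And>k. g k \<ge> 0" and sg: "(\<lambda>k. real k * g k) summable_on UNIV"
  shows "((\<lambda>i. infsum g {Suc i..}) has_sum infsum (\<lambda>k. real k * g k) UNIV) UNIV"
proof -
  define S where "S = Sigma (UNIV::nat set) (\<lambda>k. {..<k})"
  define S' where "S' = Sigma (UNIV::nat set) (\<lambda>i. {Suc i..})"
  have summ_S: "(\<lambda>(k,i). g k) summable_on S"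
    unfolding S_def
    by (intro summable_on_SigmaI[where g="\<lambda>k. real k * g k"]) (use sg g0 in \<open>auto intro: has_sum_finiteI\<close>)
  have swap: "bij_betw (\<lambda>(i,k). (k,i)) S' S"
    unfolding S_def S'_def by (rule bij_betw_byWitness[where f'="\<lambda>(k,i). (i,k)"]) auto
  have summ_S': "(\<lambda>(i,k). g k) summable_on S'"
    using summable_on_reindex_bij_betw[OF swap, of "\<lambda>(k,i). g k"] summ_S by (simp add: case_prod_unfold)
  have summ_tails: "(\<lambda>i. infsum g {Suc i..}) summable_on UNIV"
    using summable_on_Sigma_banach[of "\<lambda>i k. g k"] summ_S' unfolding S'_def by auto
  have "infsum (\<lambda>i. infsum g {Suc i..}) UNIV = infsum (\<lambda>(i,k). g k) S'"
    using infsum_Sigma'_banach[of "\<lambda>i k. g k"] summ_S' unfolding S'_def by auto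
  also have "\<dots> = infsum (\<lambda>(k,i). g k) S"
    using infsum_reindex_bij_betw[OF swap, of "\<lambda>(k,i). g k"] by (simp add: case_prod_unfold)
  also have "\<dots> = infsum (\<lambda>k. real k * g k) UNIV"
    using infsum_Sigma'_banach[of "\<lambda>k i. g k" UNIV "\<lambda>k. {..<k}"] summ_S unfolding S_def by simp
  finally show ?thesis
    using summ_tails by (simp add: has_sum_iff)
qed

lemma first_moment_le_second_moment:
  fixes q :: "nat \<Rightarrow> real"
  assumes "q k \<ge> 0"
  shows "real k * q k \<le> real k ^ 2 * q k"
proof -
  have "real k \<le> real k ^ 2" by (metis of_nat_le_iff of_nat_power le_square power2_eq_square)
  then show ?thesis using assms by (rule mult_right_mono)
qed

lemma summable_first_moment:
  fixes q :: "nat \<Rightarrow> real"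
  assumes q0: "\<And>k. q k \<ge> 0" and sq: "summable (\<lambda>k. real k ^ 2 * q k)"
  shows "summable (\<lambda>k. real k * q k)"
  by (rule summable_comparison_test'[OF sq, where N=0]) (simp add: q0 first_moment_le_second_moment)

lemma summable_of_first_moment:
  fixes q :: "nat \<Rightarrow> real"
  assumes q0: "\<And>k. q k \<ge> 0" and sq: "summable (\<lambda>k. real k * q k)"
  shows "summable q"
proof (rule summable_comparison_test'[OF sq, where N=1])
  show "norm (q k) \<le> real k * q k" if "k \<ge> 1" for k
    using that mult_right_mono[of 1 "real k" "q k"] q0[of k] by simp
qed

lemma suminf_tails_sums:
  fixes g :: "nat \<Rightarrow> real"
  assumes g0: "\<And>k. g k \<ge> 0" and sg: "summable (\<lambda>k. real k * g k)"
  shows "(\<lambda>i. \<Sum>l. g (l + Suc i)) sums (\<Sum>k. real k * g k)"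
proof -
  have sg1: "summable g" by (rule summable_of_first_moment[OF g0 sg])
  have tail: "infsum g {Suc i..} = (\<Sum>l. g (l + Suc i))" for i
  proof -
    have "bij_betw (\<lambda>l. l + Suc i) UNIV {Suc i..}"
      by (rule bij_betw_byWitness[where f'="\<lambda>k. k - Suc i"]) auto
    then have "infsum g {Suc i..} = infsum (\<lambda>l. g (l + Suc i)) UNIV"
      by (rule infsum_reindex_bij_betw[symmetric])
    also have "\<dots> = (\<Sum>l. g (l + Suc i))"
      using g0 summable_iff_shift[of g "Suc i"] sg1 by (intro abs_summable_infsum_eq_suminf) auto
    finally show ?thesis .
  qed
  have moment: "infsum (\<lambda>k. real k * g k) UNIV = (\<Sum>k. real k * g k)"
    using sg g0 by (intro abs_summable_infsum_eq_suminf) simp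
  have "(\<lambda>k. real k * g k) summable_on UNIV"
    using sg g0 by (simp add: summable_on_UNIV_nonneg_real_iff)
  from has_sum_tails[OF g0 this] show ?thesis
    unfolding tail moment by (rule has_sum_imp_sums)
qed

lemma tail_moment_sums:
  fixes q :: "nat \<Rightarrow> real"
  assumes q0: "\<And>k. q k \<ge> 0" and sq: "summable (\<lambda>k. real k ^ 2 * q k)"
  shows "summable (\<lambda>l. q (l + Suc i))"
    and "summable (\<lambda>l. real (l + Suc i) * q (l + Suc i))"
    and "(\<lambda>i. \<Sum>l. q (l + Suc i)) sums (\<Sum>k. real k * q k)"
    and "(\<lambda>i. \<Sum>l. real (l + Suc i) * q (l + Suc i)) sums (\<Sum>k. real k ^ 2 * q k)"
proof -
  have sq1: "summable (\<lambda>k. real k * q k)" by (rule summable_first_moment[OF q0 sq])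
  show "summable (\<lambda>l. q (l + Suc i))"
    using summable_of_first_moment[OF q0 sq1] by (simp only: summable_iff_shift)
  show "summable (\<lambda>l. real (l + Suc i) * q (l + Suc i))"
    using summable_iff_shift[of "\<lambda>k. real k * q k" "Suc i"] sq1 by simp
  show "(\<lambda>i. \<Sum>l. q (l + Suc i)) sums (\<Sum>k. real k * q k)"
    by (rule suminf_tails_sums[OF q0 sq1])
  show "(\<lambda>i. \<Sum>l. real (l + Suc i) * q (l + Suc i)) sums (\<Sum>k. real k ^ 2 * q k)"
    using suminf_tails_sums[of "\<lambda>k. real k * q k"] q0 sq by (simp add: power2_eq_square mult.assoc)
qed

lemma double_tail_error_bound:
  fixes q A B :: "nat \<Rightarrow> real"
  assumes q0: "\<And>k. q k \<ge> 0" and sq: "summable (\<lambda>k. real k ^ 2 * q k)"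
    and hA: "\<And>j. \<bar>A j - a\<bar> \<le> \<epsilon> * real (Suc j)"
    and hB: "\<And>i. \<bar>B i - b\<bar> \<le> \<epsilon> * real (Suc i)"
  defines "e \<equiv> \<lambda>i j. (A j - a - (B i - b)) * q (j + Suc i)"
  shows "summable (e i)" and "summable (\<lambda>i. \<bar>\<Sum>j. e i j\<bar>)"
    and "\<bar>\<Sum>i. \<Sum>j. e i j\<bar> \<le> 2 * \<epsilon> * (\<Sum>k. real k ^ 2 * q k)"
proof -
  have e: "\<bar>e i j\<bar> \<le> 2 * \<epsilon> * (real (j + Suc i) * q (j + Suc i))" for i j
  proof -
    have "\<bar>A j - a - (B i - b)\<bar> \<le> \<epsilon> * real (Suc j) + \<epsilon> * real (Suc i)"
      using hA[of j] hB[of i] by linarith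
    also have "\<dots> \<le> 2 * \<epsilon> * real (j + Suc i)"
      using hA[of 0] by (simp add: algebra_simps)
    finally have "\<bar>A j - a - (B i - b)\<bar> * q (j + Suc i) \<le> 2 * \<epsilon> * real (j + Suc i) * q (j + Suc i)"
      by (rule mult_right_mono) (rule q0)
    then show ?thesis
      unfolding e_def abs_mult using q0[of "j + Suc i"] by (simp add: mult.assoc)
  qed
  define K where "K i = (\<Sum>l. real (l + Suc i) * q (l + Suc i))" for i
  note sK = tail_moment_sums(2)[OF q0 sq]
  have K_sums: "K sums (\<Sum>k. real k ^ 2 * q k)"
    unfolding K_def by (rule tail_moment_sums(4)[OF q0 sq])
  have se: "summable (\<lambda>j. \<bar>e i j\<bar>)" for i
    by (rule summable_comparison_test'[OF summable_mult[OF sK[of i]], where N=0]) (use e in auto)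
  then show "summable (e i)" for i
    by (rule summable_rabs_cancel)
  have E_bound: "\<bar>\<Sum>j. e i j\<bar> \<le> 2 * \<epsilon> * K i" for i
  proof -
    have "\<bar>\<Sum>j. e i j\<bar> \<le> (\<Sum>j. \<bar>e i j\<bar>)" by (rule summable_rabs[OF se])
    also have "\<dots> \<le> (\<Sum>j. 2 * \<epsilon> * (real (j + Suc i) * q (j + Suc i)))"
      by (rule suminf_le) (use e se summable_mult[OF sK[of i]] in auto)
    also have "\<dots> = 2 * \<epsilon> * K i" unfolding K_def by (rule suminf_mult[OF sK])
    finally show ?thesis .
  qed
  have sK_mult: "summable (\<lambda>i. 2 * \<epsilon> * K i)"
    using K_sums by (intro summable_mult) (rule sums_summable)
  show sE: "summable (\<lambda>i. \<bar>\<Sum>j. e i j\<bar>)"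
    by (rule summable_comparison_test'[OF sK_mult, where N=0]) (use E_bound in auto)
  have "\<bar>\<Sum>i. \<Sum>j. e i j\<bar> \<le> (\<Sum>i. \<bar>\<Sum>j. e i j\<bar>)" by (rule summable_rabs[OF sE])
  also have "\<dots> \<le> (\<Sum>i. 2 * \<epsilon> * K i)" by (rule suminf_le[OF E_bound sE sK_mult])
  also have "\<dots> = 2 * \<epsilon> * (\<Sum>k. real k ^ 2 * q k)"
    using K_sums by (simp add: sums_iff suminf_mult)
  finally show "\<bar>\<Sum>i. \<Sum>j. e i j\<bar> \<le> 2 * \<epsilon> * (\<Sum>k. real k ^ 2 * q k)" .
qed

lemma flux_series_bound:
  fixes q A B :: "nat \<Rightarrow> real"
  assumes q0: "\<And>k. q k \<ge> 0" and sq: "summable (\<lambda>k. real k ^ 2 * q k)"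
    and hA: "\<And>j. \<bar>A j - a\<bar> \<le> \<epsilon> * real (Suc j)"
    and hB: "\<And>i. \<bar>B i - b\<bar> \<le> \<epsilon> * real (Suc i)"
    and flux: "\<alpha> * (a - b) * (\<Sum>k. real k * q k) + c * (\<Sum>k. real k ^ 2 * q k) = 0"
  defines "R \<equiv> \<lambda>i. \<alpha> * (\<Sum>j. (A j - B i) * q (j + Suc i))
                   + c * (\<Sum>l. real (l + Suc i) * q (l + Suc i))"
  shows "summable (\<lambda>i. \<bar>R i\<bar>)"
    and "\<bar>\<Sum>i. R i\<bar> \<le> 2 * \<bar>\<alpha>\<bar> * \<epsilon> * (\<Sum>k. real k ^ 2 * q k)"
proof -
  define e where "e i j = (A j - a - (B i - b)) * q (j + Suc i)" for i j
  note E = double_tail_error_bound[OF q0 sq hA hB, folded e_def]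
  define T where "T i = (\<Sum>l. q (l + Suc i))" for i
  define K where "K i = (\<Sum>l. real (l + Suc i) * q (l + Suc i))" for i
  note tails = tail_moment_sums[OF q0 sq, folded T_def K_def]
  \<comment> \<open>the part of R with A and B frozen at a and b\<close>
  define F where "F i = \<alpha> * (a - b) * T i + c * K i" for i
  have F_sums: "F sums 0"
    unfolding F_def flux[symmetric] by (intro sums_add sums_mult tails(3,4))
  have R_split: "R i = \<alpha> * (\<Sum>j. e i j) + F i" for i
  proof -
    have "(\<Sum>j. (A j - B i) * q (j + Suc i)) = (\<Sum>j. e i j + (a - b) * q (j + Suc i))"
      unfolding e_def by (simp add: algebra_simps)
    also have "\<dots> = (\<Sum>j. e i j) + (a - b) * T i"
      unfolding T_def using suminf_add[OF E(1)[of i] summable_mult[OF tails(1)[of i]]] suminf_mult[OF tails(1)[of i]]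
      by simp
    finally have sum_eq: "(\<Sum>j. (A j - B i) * q (j + Suc i)) = (\<Sum>j. e i j) + (a - b) * T i" .
    show ?thesis
      unfolding R_def F_def K_def[symmetric] sum_eq by (simp add: algebra_simps)
  qed
  have R_abs: "\<bar>R i\<bar> \<le> \<bar>\<alpha>\<bar> * \<bar>\<Sum>j. e i j\<bar> + (\<bar>\<alpha> * (a - b)\<bar> * T i + \<bar>c\<bar> * K i)" for i
  proof -
    have "T i \<ge> 0" "K i \<ge> 0"
      unfolding T_def K_def using tails(1,2) q0 by (simp_all add: suminf_nonneg)
    moreover have "\<bar>R i\<bar> \<le> \<bar>\<alpha> * (\<Sum>j. e i j)\<bar> + (\<bar>\<alpha> * (a - b) * T i\<bar> + \<bar>c * K i\<bar>)"
      unfolding R_split F_def by arith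
    ultimately show ?thesis by (simp add: abs_mult)
  qed
  show "summable (\<lambda>i. \<bar>R i\<bar>)"
  proof (rule summable_comparison_test'[where N=0])
    show "norm \<bar>R i\<bar> \<le> \<bar>\<alpha>\<bar> * \<bar>\<Sum>j. e i j\<bar> + (\<bar>\<alpha> * (a - b)\<bar> * T i + \<bar>c\<bar> * K i)" for i
      using R_abs[of i] by simp
  qed (intro summable_add summable_mult E(2) sums_summable[OF tails(3)] sums_summable[OF tails(4)])
  have sE: "summable (\<lambda>i. \<Sum>j. e i j)" by (rule summable_rabs_cancel[OF E(2)])
  have "(\<Sum>i. R i) = (\<Sum>i. \<alpha> * (\<Sum>j. e i j)) + (\<Sum>i. F i)"
    unfolding R_split by (rule suminf_add[symmetric]) (auto intro: summable_mult sE sums_summable[OF F_sums])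
  also have "\<dots> = \<alpha> * (\<Sum>i. \<Sum>j. e i j)"
    using F_sums suminf_mult[OF sE] by (simp add: sums_iff)
  finally show "\<bar>\<Sum>i. R i\<bar> \<le> 2 * \<bar>\<alpha>\<bar> * \<epsilon> * (\<Sum>k. real k ^ 2 * q k)"
    using mult_left_mono[OF E(3), of "\<bar>\<alpha>\<bar>"] by (simp add: abs_mult mult_ac)
qed

section \<open>Sums over the two half-lines\<close>

lemma bij_betw_int_nonneg: "bij_betw int UNIV {0::int..}"
  by (rule bij_betw_byWitness[where f'=nat]) auto

lemma bij_betw_int_neg: "bij_betw (\<lambda>j::nat. -1 - int j) UNIV {..-1::int}"
  by (rule bij_betw_byWitness[where f'="\<lambda>y. nat (-1 - y)"]) auto

lemma infsum_nonneg_int_eq_suminf: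
  fixes f :: "int \<Rightarrow> real"
  assumes "summable (\<lambda>k. \<bar>f (int k)\<bar>)"
  shows "f summable_on {0..}" and "infsum f {0..} = (\<Sum>k. f (int k))"
  using abs_summable_infsum_eq_suminf[OF assms]
    summable_on_reindex_bij_betw[OF bij_betw_int_nonneg, of f]
    infsum_reindex_bij_betw[OF bij_betw_int_nonneg, of f]
  by auto

lemma infsum_even_int:
  fixes f :: "int \<Rightarrow> real"
  assumes even: "\<And>x. f (-x) = f x" and f0: "f 0 = 0" and sf: "f summable_on {0..}"
  shows "infsum f UNIV = 2 * infsum f {0..}"
proof -
  have zero: "f x = 0" if "x \<in> {0..} - {1..}" for x
  proof -
    have "x = 0" using that by auto
    then show ?thesis using f0 by simp
  qed
  have pos: "f summable_on {1..}" "infsum f {1..} = infsum f {0..}"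
    using summable_on_cong_neutral[of "{1..}" "{0..}" f f] infsum_cong_neutral[of "{1..}" "{0..}" f f] sf zero
    by auto
  have neg_img: "{..-1} = uminus ` {1::int..}"
    by (auto simp: image_iff intro: exI[where x="- _"])
  have "f \<circ> uminus = f" using even by (simp add: fun_eq_iff)
  then have neg: "f summable_on {..-1}" "infsum f {..-1} = infsum f {0..}"
    unfolding neg_img using pos summable_on_reindex[of uminus "{1::int..}" f] infsum_reindex[of uminus "{1::int..}" f]
    by auto
  have "(UNIV::int set) = {0..} \<union> {..-1}" by auto
  then have "infsum f UNIV = infsum f {0..} + infsum f {..-1}"
    using infsum_Un_disjoint[OF sf neg(1)] by force
  then show ?thesis using neg(2) by simp
qed

lemma infsum_odd_shift:
  fixes g :: "int \<Rightarrow> real"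
  assumes odd: "\<And>x. g (-x) = - g x" and sg: "summable (\<lambda>k. \<bar>g (int k)\<bar>)"
  shows "infsum (\<lambda>y. g (y - int i)) {0..} = (\<Sum>l. g (int (l + Suc i)))"
proof -
  define f where "f j = g (int j - int i)" for j
  have shift: "f (l + Suc (2*i)) = g (int (l + Suc i))" for l
    unfolding f_def by (simp add: algebra_simps)
  have "summable (\<lambda>l. \<bar>g (int (l + Suc i))\<bar>)"
    using summable_iff_shift[of "\<lambda>k. \<bar>g (int k)\<bar>" "Suc i"] sg by simp
  then have sf: "summable (\<lambda>j. \<bar>f j\<bar>)"
    using summable_iff_shift[of "\<lambda>j. \<bar>f j\<bar>" "Suc (2*i)"] unfolding shift by simp
  \<comment> \<open>the terms j and 2 i - j cancel\<close>
  have "sum f {..<Suc (2*i)} = (\<Sum>j<Suc (2*i). f (Suc (2*i) - Suc j))"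
    by (rule sum.nat_diff_reindex[symmetric])
  also have "\<dots> = (\<Sum>j<Suc (2*i). - f j)"
  proof (rule sum.cong)
    fix j assume "j \<in> {..<Suc (2*i)}"
    then have "int (Suc (2*i) - Suc j) - int i = - (int j - int i)" by auto
    then show "f (Suc (2*i) - Suc j) = - f j" unfolding f_def using odd[of "int j - int i"] by simp
  qed simp
  finally have cancel: "sum f {..<Suc (2*i)} = 0" by (simp add: sum_negf)
  have "infsum (\<lambda>y. g (y - int i)) {0..} = infsum f UNIV"
    unfolding f_def by (rule infsum_reindex_bij_betw[OF bij_betw_int_nonneg, symmetric])
  also have "\<dots> = suminf f" by (rule abs_summable_infsum_eq_suminf[OF sf])
  also have "\<dots> = (\<Sum>l. f (l + Suc (2*i)))"
    using suminf_split_initial_segment[OF summable_rabs_cancel[OF sf], of "Suc (2*i)"] cancel by simp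
  finally show ?thesis unfolding shift .
qed

section \<open>Moments of the jump kernel\<close>

lemma pker_nonneg: "pker \<gamma> x \<ge> 0"
  unfolding pker_def cgam_def by (simp add: infsum_nonneg)

lemma pker_minus [simp]: "pker \<gamma> (-x) = pker \<gamma> x"
  by (simp add: pker_def)

lemma pker_second_moment_summable:
  assumes "\<gamma> > 2"
  shows "summable (\<lambda>k::nat. real k ^ 2 * pker \<gamma> (int k))"
proof -
  have "real k ^ 2 * pker \<gamma> (int k) = cgam \<gamma> * real k powr (1 - \<gamma>)" for k
  proof (cases "k = 0")
    case False
    then have "real k ^ 2 * real k powr (-\<gamma>-1) = real k powr 2 * real k powr (-\<gamma>-1)"
      by (simp add: powr_realpow)
    also have "\<dots> = real k powr (1 - \<gamma>)"
      unfolding powr_add[symmetric] by (simp add: algebra_simps)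
    finally show ?thesis using False unfolding pker_def by (simp add: mult_ac)
  qed (simp add: pker_def)
  then show ?thesis using assms by (simp add: summable_real_powr_iff)
qed

lemma pker_first_moment_summable:
  "\<gamma> > 2 \<Longrightarrow> summable (\<lambda>k::nat. real k * pker \<gamma> (int k))"
  by (rule summable_first_moment[OF pker_nonneg pker_second_moment_summable])

lemma mean_m_eq_suminf:
  assumes "\<gamma> > 2"
  shows "mean_m \<gamma> = (\<Sum>k. real k * pker \<gamma> (int k))"
proof -
  note nonneg = infsum_nonneg_int_eq_suminf[of "\<lambda>x. real_of_int x * pker \<gamma> x"]
  have "mean_m \<gamma> = infsum (\<lambda>x. real_of_int x * pker \<gamma> x) {0..}"
    unfolding mean_m_def by (rule infsum_cong_neutral) auto
  then show ?thesis
    using nonneg pker_first_moment_summable[OF assms] pker_nonneg by simp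
qed

lemma kappa_eq_suminf:
  assumes "\<gamma> > 2"
  shows "kappa \<gamma> = (\<Sum>k. real k ^ 2 * pker \<gamma> (int k))"
proof -
  note nonneg = infsum_nonneg_int_eq_suminf[of "\<lambda>x. (real_of_int x)^2 * pker \<gamma> x"]
  have "sigma2 \<gamma> = 2 * infsum (\<lambda>x. (real_of_int x)^2 * pker \<gamma> x) {0..}"
    unfolding sigma2_def
    by (rule infsum_even_int) (use nonneg pker_second_moment_summable[OF assms] pker_nonneg in auto)
  then show ?thesis
    unfolding kappa_def using nonneg pker_second_moment_summable[OF assms] pker_nonneg by simp
qed

lemma drift_tail_eq:
  assumes "\<gamma> > 2"
  shows "infsum (\<lambda>y. real_of_int (y - int i) * pker \<gamma> (y - int i)) {0..}
       = (\<Sum>l. real (l + Suc i) * pker \<gamma> (int (l + Suc i)))"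
  using infsum_odd_shift[of "\<lambda>x. real_of_int x * pker \<gamma> x"] pker_first_moment_summable[OF assms] pker_nonneg
  by simp

section \<open>The boundary operator\<close>

lemma glue_neg_grid:
  "real n > 0 \<Longrightarrow> glue Gm Gp (real_of_int (-1 - int j) / real n) = Gm (- real (Suc j) / real n)"
  by (simp add: glue_def divide_neg_pos)

lemma glue_nonneg_grid: "glue Gm Gp (real_of_int (int j) / real n) = Gp (real j / real n)"
proof -
  have "\<not> real j / real n < 0" by (simp add: not_less)
  then show ?thesis by (simp add: glue_def)
qed

lemma bounded_tail_infsum_eq_suminf:
  fixes A :: "nat \<Rightarrow> real"
  assumes "\<gamma> > 2" and A: "\<And>j. \<bar>A j\<bar> \<le> B"
  shows "infsum (\<lambda>j. (A j - c) * pker \<gamma> (int (j + Suc i))) UNIV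
       = (\<Sum>j. (A j - c) * pker \<gamma> (int (j + Suc i)))"
proof (rule abs_summable_infsum_eq_suminf)
  have "summable (\<lambda>k. pker \<gamma> (int k))"
    by (rule summable_of_first_moment[OF pker_nonneg pker_first_moment_summable[OF assms(1)]])
  then have "summable (\<lambda>j. (B + \<bar>c\<bar>) * pker \<gamma> (int (j + Suc i)))"
    using summable_iff_shift[of "\<lambda>k. pker \<gamma> (int k)" "Suc i"] by (simp add: summable_mult)
  then show "summable (\<lambda>j. \<bar>(A j - c) * pker \<gamma> (int (j + Suc i))\<bar>)"
  proof (rule summable_comparison_test'[where N=0])
    fix j
    have "\<bar>A j - c\<bar> \<le> B + \<bar>c\<bar>" using A[of j] by linarith
    then show "norm \<bar>(A j - c) * pker \<gamma> (int (j + Suc i))\<bar> \<le> (B + \<bar>c\<bar>) * pker \<gamma> (int (j + Suc i))"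
      using pker_nonneg[of \<gamma> "int (j + Suc i)"] by (simp add: abs_mult mult_right_mono)
  qed
qed

lemma Rop_nonneg_eq:
  assumes "\<gamma> > 2" and n: "n > 0" and B: "\<And>u. \<bar>Gm u\<bar> \<le> B"
  shows "Rop \<gamma> \<alpha> Gm Gp n (int i) =
     (\<alpha> * (\<Sum>j. (Gm (- real (Suc j) / real n) - Gp (real i / real n)) * pker \<gamma> (int (j + Suc i)))
      + deriv Gp 0 * (\<Sum>l. real (l + Suc i) * pker \<gamma> (int (l + Suc i)))) / real n"
proof -
  have n': "real n > 0" using n by simp
  have p: "pker \<gamma> (-1 - int j - int i) = pker \<gamma> (int (j + Suc i))" for j
    using pker_minus[of \<gamma> "int (j + Suc i)"] by (simp add: algebra_simps)
  have "infsum (\<lambda>y. (glue Gm Gp (real_of_int y / real n) - glue Gm Gp (real_of_int (int i) / real n))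
          * pker \<gamma> (y - int i)) {..-1}
      = infsum (\<lambda>j. (glue Gm Gp (real_of_int (-1 - int j) / real n) - glue Gm Gp (real_of_int (int i) / real n))
          * pker \<gamma> (-1 - int j - int i)) UNIV"
    by (rule infsum_reindex_bij_betw[OF bij_betw_int_neg, symmetric])
  also have "\<dots> = infsum (\<lambda>j. (Gm (- real (Suc j) / real n) - Gp (real i / real n)) * pker \<gamma> (int (j + Suc i))) UNIV"
    by (rule infsum_cong) (simp only: glue_neg_grid[OF n'] glue_nonneg_grid p)
  also have "\<dots> = (\<Sum>j. (Gm (- real (Suc j) / real n) - Gp (real i / real n)) * pker \<gamma> (int (j + Suc i)))"
    by (rule bounded_tail_infsum_eq_suminf[OF assms(1) B])
  finally show ?thesis
    unfolding Rop_def using drift_tail_eq[OF assms(1), of i] by (simp add: add_divide_distrib diff_divide_distrib)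
qed

lemma Rop_neg_eq:
  assumes "\<gamma> > 2" and n: "n > 0" and B: "\<And>u. \<bar>Gp u\<bar> \<le> B"
  shows "Rop \<gamma> \<alpha> Gm Gp n (-1 - int i) =
     (\<alpha> * (\<Sum>j. (Gp (real j / real n) - Gm (- real (Suc i) / real n)) * pker \<gamma> (int (j + Suc i)))
      + (- deriv Gm 0) * (\<Sum>l. real (l + Suc i) * pker \<gamma> (int (l + Suc i)))) / real n"
proof -
  have n': "real n > 0" using n by simp
  have p: "int j - (-1 - int i) = int (j + Suc i)" for j by simp
  have "infsum (\<lambda>y. (glue Gm Gp (real_of_int y / real n) - glue Gm Gp (real_of_int (-1 - int i) / real n))
          * pker \<gamma> (y - (-1 - int i))) {0..}
      = infsum (\<lambda>j. (glue Gm Gp (real_of_int (int j) / real n) - glue Gm Gp (real_of_int (-1 - int i) / real n))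
          * pker \<gamma> (int j - (-1 - int i))) UNIV"
    by (rule infsum_reindex_bij_betw[OF bij_betw_int_nonneg, symmetric])
  also have "\<dots> = infsum (\<lambda>j. (Gp (real j / real n) - Gm (- real (Suc i) / real n)) * pker \<gamma> (int (j + Suc i))) UNIV"
    by (rule infsum_cong) (simp only: glue_neg_grid[OF n'] glue_nonneg_grid p)
  also have "\<dots> = (\<Sum>j. (Gp (real j / real n) - Gm (- real (Suc i) / real n)) * pker \<gamma> (int (j + Suc i)))"
    by (rule bounded_tail_infsum_eq_suminf[OF assms(1) B])
  finally have jump: "infsum (\<lambda>y. (glue Gm Gp (real_of_int y / real n) - glue Gm Gp (real_of_int (-1 - int i) / real n))
          * pker \<gamma> (y - (-1 - int i))) {0..} = \<dots>" .
  have reflect: "real_of_int (-1 - int j - (-1 - int i)) * pker \<gamma> (-1 - int j - (-1 - int i))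
      = - (real_of_int (int j - int i) * pker \<gamma> (int j - int i))" for j
    using pker_minus[of \<gamma> "int j - int i"] by (simp add: algebra_simps)
  have "infsum (\<lambda>y. real_of_int (y - (-1 - int i)) * pker \<gamma> (y - (-1 - int i))) {..-1}
      = - infsum (\<lambda>y. real_of_int (y - int i) * pker \<gamma> (y - int i)) {0..}"
    using infsum_reindex_bij_betw[OF bij_betw_int_neg, of "\<lambda>y. real_of_int (y - (-1 - int i)) * pker \<gamma> (y - (-1 - int i))"]
      infsum_reindex_bij_betw[OF bij_betw_int_nonneg, of "\<lambda>y. real_of_int (y - int i) * pker \<gamma> (y - int i)"]
    by (simp only: reflect infsum_uminus o_def)
  then show ?thesis
    unfolding Rop_def using jump drift_tail_eq[OF assms(1), of i] by (simp add: add_divide_distrib diff_divide_distrib)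
qed

lemma lipschitz_at_0_on_grid:
  fixes G :: "real \<Rightarrow> real"
  assumes L: "\<And>u. \<bar>G u - G 0\<bar> \<le> L * \<bar>u\<bar>" and n: "n > 0"
  shows "\<bar>G (real i / real n) - G 0\<bar> \<le> L / real n * real (Suc i)"
    and "\<bar>G (- real (Suc i) / real n) - G 0\<bar> \<le> L / real n * real (Suc i)"
proof -
  have L0: "L \<ge> 0" using L[of 1] by simp
  have "\<bar>G (real i / real n) - G 0\<bar> \<le> L * (real i / real n)" using L[of "real i / real n"] by simp
  also have "\<dots> \<le> L / real n * real (Suc i)"
    using L0 n by (simp add: divide_right_mono mult_left_mono)
  finally show "\<bar>G (real i / real n) - G 0\<bar> \<le> L / real n * real (Suc i)" .
  show "\<bar>G (- real (Suc i) / real n) - G 0\<bar> \<le> L / real n * real (Suc i)"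
    using L[of "- real (Suc i) / real n"] by (simp add: ac_simps)
qed

lemma Rop_nonneg_sum_bound:
  assumes "\<gamma> > 2" and n: "n > 0" and B: "\<And>u. \<bar>Gm u\<bar> \<le> B"
    and Lm: "\<And>u. \<bar>Gm u - Gm 0\<bar> \<le> L * \<bar>u\<bar>" and Lp: "\<And>u. \<bar>Gp u - Gp 0\<bar> \<le> L * \<bar>u\<bar>"
    and flux: "deriv Gp 0 * kappa \<gamma> = \<alpha> * (Gp 0 - Gm 0) * mean_m \<gamma>"
  shows "\<bar>infsum (Rop \<gamma> \<alpha> Gm Gp n) {0..}\<bar> \<le> 2 * \<bar>\<alpha>\<bar> * (L / real n) * kappa \<gamma> / real n"
proof -
  have "\<alpha> * (Gm 0 - Gp 0) * (\<Sum>k. real k * pker \<gamma> (int k)) + deriv Gp 0 * (\<Sum>k. real k ^ 2 * pker \<gamma> (int k)) = 0"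
    using flux unfolding mean_m_eq_suminf[OF assms(1)] kappa_eq_suminf[OF assms(1)] by (simp add: algebra_simps)
  note R = flux_series_bound[OF pker_nonneg pker_second_moment_summable[OF assms(1)]
      lipschitz_at_0_on_grid(2)[OF Lm n] lipschitz_at_0_on_grid(1)[OF Lp n] this]
  have "infsum (Rop \<gamma> \<alpha> Gm Gp n) {0..} = infsum (\<lambda>i. Rop \<gamma> \<alpha> Gm Gp n (int i)) UNIV"
    by (rule infsum_reindex_bij_betw[OF bij_betw_int_nonneg, symmetric])
  also have "\<dots> = (\<Sum>i. \<alpha> * (\<Sum>j. (Gm (- real (Suc j) / real n) - Gp (real i / real n)) * pker \<gamma> (int (j + Suc i)))
      + deriv Gp 0 * (\<Sum>l. real (l + Suc i) * pker \<gamma> (int (l + Suc i)))) / real n"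
    unfolding Rop_nonneg_eq[OF assms(1) n B] using R(1)
    by (simp add: abs_summable_infsum_eq_suminf suminf_divide summable_rabs_cancel)
  finally show ?thesis
    unfolding kappa_eq_suminf[OF assms(1)] using divide_right_mono[OF R(2), of "real n"] by simp
qed

lemma Rop_neg_sum_bound:
  assumes "\<gamma> > 2" and n: "n > 0" and B: "\<And>u. \<bar>Gp u\<bar> \<le> B"
    and Lm: "\<And>u. \<bar>Gm u - Gm 0\<bar> \<le> L * \<bar>u\<bar>" and Lp: "\<And>u. \<bar>Gp u - Gp 0\<bar> \<le> L * \<bar>u\<bar>"
    and flux: "deriv Gm 0 * kappa \<gamma> = \<alpha> * (Gp 0 - Gm 0) * mean_m \<gamma>"
  shows "\<bar>infsum (Rop \<gamma> \<alpha> Gm Gp n) {..-1}\<bar> \<le> 2 * \<bar>\<alpha>\<bar> * (L / real n) * kappa \<gamma> / real n"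
proof -
  have "\<alpha> * (Gp 0 - Gm 0) * (\<Sum>k. real k * pker \<gamma> (int k)) + (- deriv Gm 0) * (\<Sum>k. real k ^ 2 * pker \<gamma> (int k)) = 0"
    using flux unfolding mean_m_eq_suminf[OF assms(1)] kappa_eq_suminf[OF assms(1)] by simp
  note R = flux_series_bound[OF pker_nonneg pker_second_moment_summable[OF assms(1)]
      lipschitz_at_0_on_grid(1)[OF Lp n] lipschitz_at_0_on_grid(2)[OF Lm n] this]
  have "infsum (Rop \<gamma> \<alpha> Gm Gp n) {..-1} = infsum (\<lambda>i. Rop \<gamma> \<alpha> Gm Gp n (-1 - int i)) UNIV"
    by (rule infsum_reindex_bij_betw[OF bij_betw_int_neg, symmetric])
  also have "\<dots> = (\<Sum>i. \<alpha> * (\<Sum>j. (Gp (real j / real n) - Gm (- real (Suc i) / real n)) * pker \<gamma> (int (j + Suc i)))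
      + (- deriv Gm 0) * (\<Sum>l. real (l + Suc i) * pker \<gamma> (int (l + Suc i)))) / real n"
    unfolding Rop_neg_eq[OF assms(1) n B] using R(1)
    by (simp add: abs_summable_infsum_eq_suminf suminf_divide summable_rabs_cancel)
  finally show ?thesis
    unfolding kappa_eq_suminf[OF assms(1)] using divide_right_mono[OF R(2), of "real n"] by simp
qed

lemma schwartz_bounded:
  assumes "schwartz G"
  obtains B where "\<And>u. \<bar>G u\<bar> \<le> B"
proof -
  have "bounded (range (\<lambda>x. x ^ 0 * (deriv ^^ 0) G x))" using assms unfolding schwartz_def by blast
  then show ?thesis using that unfolding bounded_iff by auto
qed

lemma schwartz_lipschitz:
  assumes "schwartz G"
  obtains L where "\<And>u v. \<bar>G u - G v\<bar> \<le> L * \<bar>u - v\<bar>"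
proof -
  have "bounded (range (\<lambda>x. x ^ 0 * (deriv ^^ 1) G x))" using assms unfolding schwartz_def by blast
  then obtain L where L: "\<And>x. \<bar>deriv G x\<bar> \<le> L" unfolding bounded_iff by auto
  have "G differentiable at x" for x using assms unfolding schwartz_def by (metis funpow_0)
  then have "(G has_field_derivative deriv G x) (at x within UNIV)" for x
    by (simp add: DERIV_deriv_iff_real_differentiable)
  then have "\<bar>G u - G v\<bar> \<le> L * \<bar>u - v\<bar>" for u v
    using field_differentiable_bound[of UNIV G "deriv G" L u v] L by simp
  then show ?thesis using that by blast
qed

lemma robin_pair_flux:
  assumes "\<gamma> > 2" and "robin_pair \<gamma> \<alpha> Gm Gp"
  shows "deriv Gm 0 * kappa \<gamma> = \<alpha> * (Gp 0 - Gm 0) * mean_m \<gamma>"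
    and "deriv Gp 0 * kappa \<gamma> = \<alpha> * (Gp 0 - Gm 0) * mean_m \<gamma>"
proof -
  have robin0: "deriv Gm 0 = alpha_hat \<gamma> \<alpha> * (Gp 0 - Gm 0)" "deriv Gp 0 = alpha_hat \<gamma> \<alpha> * (Gp 0 - Gm 0)"
    using assms(2) unfolding robin_pair_def by (auto dest: spec[where x=0])
  have m_le: "mean_m \<gamma> \<le> kappa \<gamma>"
    unfolding mean_m_eq_suminf[OF assms(1)] kappa_eq_suminf[OF assms(1)]
    by (rule suminf_le[OF first_moment_le_second_moment[where q="\<lambda>k. pker \<gamma> (int k)", OF pker_nonneg]
          pker_first_moment_summable[OF assms(1)] pker_second_moment_summable[OF assms(1)]])
  have m0: "mean_m \<gamma> \<ge> 0"
    unfolding mean_m_eq_suminf[OF assms(1)]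
    using pker_first_moment_summable[OF assms(1)] pker_nonneg by (simp add: suminf_nonneg)
  \<comment> \<open>alpha_hat divides by kappa, which is harmless: kappa = 0 forces mean_m = 0\<close>
  have "kappa \<gamma> * alpha_hat \<gamma> \<alpha> = \<alpha> * mean_m \<gamma>"
  proof (cases "kappa \<gamma> = 0")
    case True
    then show ?thesis using m_le m0 by simp
  qed (simp add: alpha_hat_def)
  then have "alpha_hat \<gamma> \<alpha> * (Gp 0 - Gm 0) * kappa \<gamma> = \<alpha> * (Gp 0 - Gm 0) * mean_m \<gamma>"
    by (metis mult.assoc mult.commute)
  then show "deriv Gm 0 * kappa \<gamma> = \<alpha> * (Gp 0 - Gm 0) * mean_m \<gamma>"
    and "deriv Gp 0 * kappa \<gamma> = \<alpha> * (Gp 0 - Gm 0) * mean_m \<gamma>"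
    by (simp_all only: robin0)
qed

lemma Rop_sums_bound:
  assumes "\<gamma> > 2" and robin: "robin_pair \<gamma> \<alpha> Gm Gp"
  obtains C where "\<And>n. n > 0 \<Longrightarrow> \<bar>infsum (Rop \<gamma> \<alpha> Gm Gp n) {0..}\<bar> \<le> C / real n ^ 2"
    and "\<And>n. n > 0 \<Longrightarrow> \<bar>infsum (Rop \<gamma> \<alpha> Gm Gp n) {..-1}\<bar> \<le> C / real n ^ 2"
proof -
  have sm: "schwartz Gm" and sp: "schwartz Gp" using robin unfolding robin_pair_def by auto
  obtain Bm Bp where Bm: "\<And>u. \<bar>Gm u\<bar> \<le> Bm" and Bp: "\<And>u. \<bar>Gp u\<bar> \<le> Bp"
    using schwartz_bounded[OF sm] schwartz_bounded[OF sp] by metis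
  obtain Lm Lp where Lm: "\<And>u v. \<bar>Gm u - Gm v\<bar> \<le> Lm * \<bar>u - v\<bar>" and Lp: "\<And>u v. \<bar>Gp u - Gp v\<bar> \<le> Lp * \<bar>u - v\<bar>"
    using schwartz_lipschitz[OF sm] schwartz_lipschitz[OF sp] by metis
  define L where "L = max Lm Lp"
  have Lm0: "\<bar>Gm u - Gm 0\<bar> \<le> L * \<bar>u\<bar>" and Lp0: "\<bar>Gp u - Gp 0\<bar> \<le> L * \<bar>u\<bar>" for u
    using Lm[of u 0] Lp[of u 0] mult_right_mono[of Lm L "\<bar>u\<bar>"] mult_right_mono[of Lp L "\<bar>u\<bar>"]
    unfolding L_def by auto
  define C where "C = 2 * \<bar>\<alpha>\<bar> * L * kappa \<gamma>"
  have scale: "2 * \<bar>\<alpha>\<bar> * (L / real n) * kappa \<gamma> / real n = C / real n ^ 2" for n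
    by (simp add: C_def power2_eq_square)
  show ?thesis
  proof (rule that)
    show "\<bar>infsum (Rop \<gamma> \<alpha> Gm Gp n) {0..}\<bar> \<le> C / real n ^ 2" if "n > 0" for n
      using Rop_nonneg_sum_bound[OF assms(1) that Bm Lm0 Lp0 robin_pair_flux(2)[OF assms]] unfolding scale .
    show "\<bar>infsum (Rop \<gamma> \<alpha> Gm Gp n) {..-1}\<bar> \<le> C / real n ^ 2" if "n > 0" for n
      using Rop_neg_sum_bound[OF assms(1) that Bp Lm0 Lp0 robin_pair_flux(1)[OF assms]] unfolding scale .
  qed
qed

section \<open>Time integrals\<close>

lemma set_integral_interval_abs_bound:
  fixes f :: "real \<Rightarrow> real"
  assumes B: "\<And>s. \<bar>f s\<bar> \<le> B" and t: "t \<ge> 0"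
  shows "\<bar>LINT s:{0..t}|lborel. f s\<bar> \<le> B * t"
proof -
  define g where "g s = \<bar>indicator {0..t} s *\<^sub>R f s\<bar>" for s :: real
  have "\<bar>LINT s:{0..t}|lborel. f s\<bar> \<le> integral\<^sup>L lborel g"
    unfolding set_lebesgue_integral_def g_def
    using integral_norm_bound[of lborel "\<lambda>s. indicator {0..t} s *\<^sub>R f s"] by simp
  also have "\<dots> \<le> B * t"
  proof (cases "integrable lborel g")
    case True
    have "integrable lborel (\<lambda>x. B * indicator {0..t} x)"
      using borel_integrable_atLeastAtMost[of 0 t "\<lambda>x. B"] by (simp add: mult.commute)
    then have "integral\<^sup>L lborel g \<le> integral\<^sup>L lborel (\<lambda>x. B * (x ^ 0 * indicator {0..t} x))"
      by (intro integral_mono[OF True]) (use B in \<open>auto simp: g_def indicator_def\<close>)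
    also have "\<dots> = B * t"
      using integral_power[of 0 t 0] t by (simp add: integral_mult_right_zero)
    finally show ?thesis .
  next
    case False
    then show ?thesis using B[of 0] t by (simp add: not_integrable_integral_eq)
  qed
  finally show ?thesis .
qed

lemma nn_integral_sup_time_integral_bound:
  fixes h :: "real \<Rightarrow> 'a \<Rightarrow> real"
  assumes "prob_space M" and K: "\<bar>K\<bar> \<le> \<epsilon>" and h: "\<And>s \<omega>. \<bar>h s \<omega>\<bar> \<le> 1"
  shows "(\<integral>\<^sup>+\<omega>. (SUP t\<in>{0..T}. ennreal ((LINT s:{0..t}|lborel. K * h s \<omega>) ^ 2)) \<partial>M)
       \<le> ennreal ((\<epsilon> * T) ^ 2)"
proof -
  have pointwise: "(LINT s:{0..t}|lborel. K * h s \<omega>) ^ 2 \<le> (\<epsilon> * T) ^ 2" if t: "t \<in> {0..T}" for t \<omega>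
  proof -
    have "\<bar>LINT s:{0..t}|lborel. K * h s \<omega>\<bar> \<le> \<bar>K\<bar> * t"
      by (rule set_integral_interval_abs_bound) (use h t in \<open>auto simp: abs_mult intro: mult_left_le\<close>)
    also have "\<dots> \<le> \<epsilon> * T"
      using K t by (intro mult_mono) auto
    finally show ?thesis
      using power_mono[of "\<bar>LINT s:{0..t}|lborel. K * h s \<omega>\<bar>" "\<epsilon> * T" 2] by simp
  qed
  have "(\<integral>\<^sup>+\<omega>. (SUP t\<in>{0..T}. ennreal ((LINT s:{0..t}|lborel. K * h s \<omega>) ^ 2)) \<partial>M)
      \<le> (\<integral>\<^sup>+\<omega>. ennreal ((\<epsilon> * T) ^ 2) \<partial>M)"
    by (intro nn_integral_mono SUP_least ennreal_leI pointwise)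
  also have "\<dots> = ennreal ((\<epsilon> * T) ^ 2)"
    using prob_space.emeasure_space_1[OF assms(1)] by (simp add: nn_integral_const)
  finally show ?thesis .
qed

lemma nn_integral_sup_time_integral_tendsto_0:
  fixes M :: "nat \<Rightarrow> 'a measure" and h :: "nat \<Rightarrow> real \<Rightarrow> 'a \<Rightarrow> real" and S :: "nat \<Rightarrow> real"
  assumes P: "\<And>n. prob_space (M n)" and S: "\<And>n. n > 0 \<Longrightarrow> \<bar>S n\<bar> \<le> C / real n ^ 2"
    and h: "\<And>n s \<omega>. \<bar>h n s \<omega>\<bar> \<le> 1"
  shows "(\<lambda>n. \<integral>\<^sup>+\<omega>. (SUP t\<in>{0..T}. ennreal
            ((LINT s:{0..t}|lborel. (real n ^ 2 / sqrt (real n)) * S n * h n s \<omega>) ^ 2)) \<partial>(M n))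
          \<longlonglongrightarrow> 0" (is "?I \<longlonglongrightarrow> 0")
proof -
  have bound: "?I n \<le> ennreal ((C / sqrt (real n) * T) ^ 2)" if n: "n > 0" for n
  proof (rule nn_integral_sup_time_integral_bound[OF P _ h])
    have "\<bar>real n ^ 2 / sqrt (real n) * S n\<bar> = real n ^ 2 / sqrt (real n) * \<bar>S n\<bar>"
      by (simp add: abs_mult)
    also have "\<dots> \<le> real n ^ 2 / sqrt (real n) * (C / real n ^ 2)"
      using S[OF n] by (intro mult_left_mono) auto
    also have "\<dots> = C / sqrt (real n)" using n by (simp add: field_simps)
    finally show "\<bar>real n ^ 2 / sqrt (real n) * S n\<bar> \<le> C / sqrt (real n)" .
  qed
  have "(\<lambda>n. (C / sqrt (real n) * T) ^ 2) = (\<lambda>n. C^2 * T^2 * (1 / real n))"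
    by (simp add: power_mult_distrib power_divide)
  then have "(\<lambda>n. (C / sqrt (real n) * T) ^ 2) \<longlonglongrightarrow> 0"
    by (simp only:) (intro tendsto_mult_right_zero lim_inverse_n')
  then have lim: "(\<lambda>n. ennreal ((C / sqrt (real n) * T) ^ 2)) \<longlonglongrightarrow> 0"
    using tendsto_ennrealI by fastforce
  show ?thesis
  proof (rule tendsto_sandwich[OF _ _ tendsto_const lim])
    show "\<forall>\<^sub>F n in sequentially. 0 \<le> ?I n" by simp
    show "\<forall>\<^sub>F n in sequentially. ?I n \<le> ennreal ((C / sqrt (real n) * T) ^ 2)"
      by (rule eventually_mono[OF eventually_gt_at_top[of 0]]) (rule bound)
  qed
qed

theorem proposition5p3:
  fixes \<gamma> \<alpha> b T :: real
    and Gm Gp :: "real \<Rightarrow> real"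
    and M :: "nat \<Rightarrow> 'a measure"
    and X :: "nat \<Rightarrow> real \<Rightarrow> 'a \<Rightarrow> config"
  assumes "\<gamma> > 2" and "\<alpha> > 0" and "0 < b" and "b < 1" and "T > 0"
    and "robin_pair \<gamma> \<alpha> Gm Gp"
    and "\<And>n. exclusion_solution \<gamma> \<alpha> b n (M n) (X n)"
  shows "((\<lambda>n. \<integral>\<^sup>+\<omega>. (SUP t\<in>{0..T}. ennreal
            ((LINT s:{0..t}|lborel. (real n ^ 2 / sqrt (real n))
                * (\<Sum>\<^sub>\<infinity>x\<in>{0::int..}. Rop \<gamma> \<alpha> Gm Gp n x)
                * (of_bool (X n (s * real n ^ 2) \<omega> 0) - b)) ^ 2)) \<partial>(M n))
          \<longlonglongrightarrow> 0) \<and>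
         ((\<lambda>n. \<integral>\<^sup>+\<omega>. (SUP t\<in>{0..T}. ennreal
            ((LINT s:{0..t}|lborel. (real n ^ 2 / sqrt (real n))
                * (\<Sum>\<^sub>\<infinity>x\<in>{..-1::int}. Rop \<gamma> \<alpha> Gm Gp n x)
                * (of_bool (X n (s * real n ^ 2) \<omega> (-1)) - b)) ^ 2)) \<partial>(M n))
          \<longlonglongrightarrow> 0)"
proof -
  obtain C where nonneg_sites: "\<And>n. n > 0 \<Longrightarrow> \<bar>infsum (Rop \<gamma> \<alpha> Gm Gp n) {0..}\<bar> \<le> C / real n ^ 2"
    and neg_sites: "\<And>n. n > 0 \<Longrightarrow> \<bar>infsum (Rop \<gamma> \<alpha> Gm Gp n) {..-1}\<bar> \<le> C / real n ^ 2"
    using Rop_sums_bound[OF assms(1) assms(6)] by blast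
  have P: "\<And>n. prob_space (M n)"
    using assms(7) unfolding exclusion_solution_def by blast
  have h: "\<bar>of_bool (X n (s * real n ^ 2) \<omega> z) - b\<bar> \<le> 1" for n s \<omega> z
    using assms(3,4) by auto
  \<comment> \<open>the bound is uniform\<close>
  show ?thesis
    by (intro conjI nn_integral_sup_time_integral_tendsto_0 P h) (fact nonneg_sites neg_sites)+
qed

end
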